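(* Let $\bar A_1,\bar A_2$ be arrival processes such that $\bar A_i$ is $(\lambda_i,\nu_i)$-constrained for $i=1,2$, with $\lambda_i>0$, $\nu_i\ge 0$. Then their superposition (aggregate process) $\bar A$ is $(\lambda,\nu)$-constrained with $$\lambda=\lambda_1+\lambda_2,\qquad \nu=\nu_1+\nu_2+1.$$
   Context: An arrival process is described by its arrival time function: a nondecreasing sequence $(\bar A(n))_{n\ge 1}$ of nonnegative real numbers, where $\bar A(n)$ is the arrival time of packet $n$. By convention $\bar A(0)=0$, and $\bar A(m,n):=\bar A(n)-\bar A(m)$ for integers $n\ge m\ge 0$. Write $x^+=\max\{x,0\}$. For constants $\lambda>0$ and $\nu\ge 0$, the process is called $(\lambda,\nu)$-constrained if $\bar A(m,n)\ge \frac{1}{\lambda}(n-m-\nu)^+$ for all integers $n\ge m\ge 0$. The superposition (aggregate) of arrival processes $\bar A_1,\dots,\bar A_I$ (each with $\bar A_i(0)=0$) is the arrival process $\bar A$ given by $\bar A(n)=\inf\{\max_{1\le i\le I}\bar A_i(m_i): m_1,\dots,m_I\ge 0 \text{ integers},\ m_1+\cdots+m_I=n\}$ for $n\ge 0$; equivalently, $\bar A(n)$ is the $n$-th smallest element (counted with multiplicity) of the multiset of all packet arrival times $\{\bar A_i(k): 1\le i\le I,\ k\ge 1\}$. *)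

theory Defs
  imports Complex_Main
begin

text \<open>An arrival time function: nondecreasing sequence of nonnegative reals,
  indexed by packet number, with the convention A 0 = 0.\<close>
definition arrival_process :: "(nat \<Rightarrow> real) \<Rightarrow> bool" where
  "arrival_process A \<longleftrightarrow> A 0 = 0 \<and> mono A \<and> (\<forall>n. 0 \<le> A n)"

definition arr_incr :: "(nat \<Rightarrow> real) \<Rightarrow> nat \<Rightarrow> nat \<Rightarrow> real" where
  "arr_incr A m n = A n - A m"

definition constrained :: "real \<Rightarrow> real \<Rightarrow> (nat \<Rightarrow> real) \<Rightarrow> bool" where
  "constrained lam nu A \<longleftrightarrow>
     (\<forall>m n. m \<le> n \<longrightarrow> arr_incr A m n \<ge> (1 / lam) * max (real n - real m - nu) 0)"

text \<open>Superposition of two arrival processes (the case I = 2 of the general definition).\<close>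
definition superpos2 :: "(nat \<Rightarrow> real) \<Rightarrow> (nat \<Rightarrow> real) \<Rightarrow> nat \<Rightarrow> real" where
  "superpos2 A1 A2 n = Inf {max (A1 m1) (A2 m2) | m1 m2. m1 + m2 = n}"

end

theory Submission
  imports Defs
begin

text \<open>Let \<open>t\<close> and \<open>T\<close> be the aggregate arrival times of packets \<open>m \<le> n\<close>, and let \<open>T\<close> be
  attained by the split \<open>a + (n - a) = n\<close>. If \<open>c\<^sub>i\<close> is the first packet of stream \<open>i\<close> arriving
  no earlier than \<open>t\<close>, then \<open>c\<^sub>1 + c\<^sub>2 \<le> m + 1\<close>, since otherwise some split of \<open>m\<close> would have
  all its packets arriving before \<open>t\<close>. The packets \<open>c\<^sub>1,\<dots>,a\<close> of stream 1 arrive in \<open>[t, T]\<close>,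
  so \<open>\<lambda>\<^sub>1 (T - t) \<ge> a - c\<^sub>1 - \<nu>\<^sub>1\<close>, and likewise \<open>\<lambda>\<^sub>2 (T - t) \<ge> n - a - c\<^sub>2 - \<nu>\<^sub>2\<close>;
  adding the two gives the claim.\<close>

lemma constrained_iff:
  assumes "lam > 0"
  shows "constrained lam nu A \<longleftrightarrow>
    (\<forall>m n. m \<le> n \<longrightarrow> A m \<le> A n \<and> real n - real m - nu \<le> lam * (A n - A m))"
proof -
  have "(1 / lam) * max x 0 \<le> d \<longleftrightarrow> 0 \<le> d \<and> x \<le> lam * d" for x d :: real
    using assms by (simp add: pos_divide_le_eq zero_le_mult_iff mult.commute conj_commute)
  then show ?thesis
    unfolding constrained_def arr_incr_def by auto
qed

lemma superpos2_eq_Min: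
  "superpos2 A1 A2 n = Min ((\<lambda>k. max (A1 k) (A2 (n - k))) ` {..n})"
proof -
  have "{max (A1 m1) (A2 m2) | m1 m2. m1 + m2 = n} = (\<lambda>k. max (A1 k) (A2 (n - k))) ` {..n}"
  proof (intro subset_antisym subsetI)
    fix x
    assume "x \<in> {max (A1 m1) (A2 m2) | m1 m2. m1 + m2 = n}"
    then obtain m1 m2 where "x = max (A1 m1) (A2 m2)" "m1 + m2 = n" by blast
    then show "x \<in> (\<lambda>k. max (A1 k) (A2 (n - k))) ` {..n}"
      by (intro image_eqI[of _ _ m1]) auto
  next
    fix x
    assume "x \<in> (\<lambda>k. max (A1 k) (A2 (n - k))) ` {..n}"
    then obtain k where "k \<le> n" "x = max (A1 k) (A2 (n - k))" by auto
    then show "x \<in> {max (A1 m1) (A2 m2) | m1 m2. m1 + m2 = n}" by force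
  qed
  then show ?thesis
    unfolding superpos2_def by (simp add: cInf_eq_Min)
qed

lemma superpos2_attained: "\<exists>k\<le>n. superpos2 A1 A2 n = max (A1 k) (A2 (n - k))"
proof -
  have "Min ((\<lambda>k. max (A1 k) (A2 (n - k))) ` {..n}) \<in> (\<lambda>k. max (A1 k) (A2 (n - k))) ` {..n}"
    by (rule Min_in) auto
  then show ?thesis
    unfolding superpos2_eq_Min by (auto simp del: Min_in)
qed

lemma superpos2_le: "k \<le> n \<Longrightarrow> superpos2 A1 A2 n \<le> max (A1 k) (A2 (n - k))"
  unfolding superpos2_eq_Min by (rule Min_le) auto

lemma mono_superpos2:
  assumes "mono A1" "mono A2"
  shows "mono (superpos2 A1 A2)"
proof (rule monoI)
  fix m n :: nat
  assume "m \<le> n"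
  obtain a where a: "a \<le> n" "superpos2 A1 A2 n = max (A1 a) (A2 (n - a))"
    using superpos2_attained by blast
  have "superpos2 A1 A2 m \<le> max (A1 (min a m)) (A2 (m - min a m))"
    by (rule superpos2_le) simp
  also have "\<dots> \<le> max (A1 a) (A2 (n - a))"
    using assms \<open>m \<le> n\<close> by (intro max.mono monoD[of A1] monoD[of A2]) auto
  finally show "superpos2 A1 A2 m \<le> superpos2 A1 A2 n"
    using a by simp
qed

lemma constrained_first_arrival_ge:
  assumes "A 0 = 0" "lam > 0" "constrained lam nu A"
  shows "\<exists>c. t \<le> A c \<and> (\<forall>k<c. A k < t)"
proof -
  obtain k :: nat where "lam * t + nu \<le> real k"
    using real_arch_simple by blast
  moreover have "real k - nu \<le> lam * A k"
    using assms constrained_iff[of lam nu A] by fastforce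
  ultimately have "t \<le> A k"
    using assms(2) by (smt (verit) mult_le_cancel_left_pos)
  then show ?thesis
    by (intro exI[of _ "LEAST c. t \<le> A c"]) (auto intro: LeastI dest: not_less_Least)
qed

lemma constrained_arrivals_between:
  assumes "lam > 0" "nu \<ge> 0" "constrained lam nu A"
    and "t \<le> T" "t \<le> A c" "A a \<le> T"
  shows "real a - real c - nu \<le> lam * (T - t)"
proof (cases "c \<le> a")
  case True
  then have "real a - real c - nu \<le> lam * (A a - A c)"
    using assms(1,3) constrained_iff by blast
  also have "\<dots> \<le> lam * (T - t)"
    using assms by (intro mult_left_mono) auto
  finally show ?thesis .
next
  case False
  then show ?thesis
    using assms by (smt (verit) of_nat_less_iff not_le mult_nonneg_nonneg)
qed

text \<open>If \<open>c\<^sub>1 + c\<^sub>2 \<ge> m + 2\<close>, the split \<open>x + (m - x) = m\<close> with \<open>x = min (c\<^sub>1 - 1) m\<close> has both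
  packets arriving strictly before \<open>superpos2 A1 A2 m\<close>; packet 0 of either stream arrives at
  time 0, which is then also early.\<close>

lemma superpos2_early_arrivals:
  assumes "A1 0 = 0" "A2 0 = 0"
    and early1: "\<forall>k<c1. A1 k < superpos2 A1 A2 m"
    and early2: "\<forall>k<c2. A2 k < superpos2 A1 A2 m"
  shows "c1 + c2 \<le> m + 1"
proof (rule ccontr)
  assume "\<not> c1 + c2 \<le> m + 1"
  define t where "t = superpos2 A1 A2 m"
  have "0 < c1 \<or> 0 < c2"
    using \<open>\<not> c1 + c2 \<le> m + 1\<close> by linarith
  then have t_pos: "0 < t"
    using assms unfolding t_def by auto
  define x where "x = min (c1 - 1) m"
  have "A1 x < t"
    using early1 t_pos assms(1) unfolding t_def x_def by (cases "c1 = 0") auto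
  moreover have "A2 (m - x) < t"
  proof (cases "m - x = 0")
    case True
    then show ?thesis using t_pos assms(2) by simp
  next
    case False
    then have "m - x < c2"
      using \<open>\<not> c1 + c2 \<le> m + 1\<close> unfolding x_def by linarith
    then show ?thesis using early2 unfolding t_def by blast
  qed
  moreover have "t \<le> max (A1 x) (A2 (m - x))"
    unfolding t_def x_def by (rule superpos2_le) simp
  ultimately show False by simp
qed

lemma superpos2_incr_bound:
  assumes "arrival_process A1" "arrival_process A2"
    and "lam1 > 0" "lam2 > 0" "nu1 \<ge> 0" "nu2 \<ge> 0"
    and "constrained lam1 nu1 A1" "constrained lam2 nu2 A2"
    and "m \<le> n"
  shows "superpos2 A1 A2 m \<le> superpos2 A1 A2 n \<and>
    real n - real m - (nu1 + nu2 + 1) \<le> (lam1 + lam2) * (superpos2 A1 A2 n - superpos2 A1 A2 m)"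
proof -
  have A1: "A1 0 = 0" "mono A1" and A2: "A2 0 = 0" "mono A2"
    using assms(1,2) unfolding arrival_process_def by auto
  define t where "t = superpos2 A1 A2 m"
  define T where "T = superpos2 A1 A2 n"
  have "t \<le> T"
    using mono_superpos2[OF A1(2) A2(2)] \<open>m \<le> n\<close> unfolding t_def T_def by (simp add: monoD)
  obtain a where a: "a \<le> n" "T = max (A1 a) (A2 (n - a))"
    using superpos2_attained T_def by blast
  obtain c1 where c1: "t \<le> A1 c1" "\<forall>k<c1. A1 k < t"
    using constrained_first_arrival_ge[OF A1(1) assms(3,7)] by blast
  obtain c2 where c2: "t \<le> A2 c2" "\<forall>k<c2. A2 k < t"
    using constrained_first_arrival_ge[OF A2(1) assms(4,8)] by blast
  have "c1 + c2 \<le> m + 1"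
    using superpos2_early_arrivals[of A1 A2 c1 m c2] A1(1) A2(1) c1(2) c2(2) unfolding t_def by blast
  moreover have "real a - real c1 - nu1 \<le> lam1 * (T - t)"
    using constrained_arrivals_between[OF assms(3,5,7) \<open>t \<le> T\<close> c1(1), of a] a by simp
  moreover have "real (n - a) - real c2 - nu2 \<le> lam2 * (T - t)"
    using constrained_arrivals_between[OF assms(4,6,8) \<open>t \<le> T\<close> c2(1), of "n - a"] a by simp
  ultimately show ?thesis
    using \<open>t \<le> T\<close> a(1) unfolding t_def[symmetric] T_def[symmetric]
    by (simp add: distrib_right of_nat_diff)
qed

theorem lemma5:
  fixes A1 A2 :: "nat \<Rightarrow> real" and lam1 lam2 nu1 nu2 :: real
  assumes "arrival_process A1" and "arrival_process A2"
    and "lam1 > 0" and "lam2 > 0" and "nu1 \<ge> 0" and "nu2 \<ge> 0"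
    and "constrained lam1 nu1 A1" and "constrained lam2 nu2 A2"
  shows "constrained (lam1 + lam2) (nu1 + nu2 + 1) (superpos2 A1 A2)"
  using superpos2_incr_bound[OF assms] assms(3,4) by (simp add: constrained_iff)

end
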